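(* Let $p\geq 1$ and let $\mathcal{A}$ be an $n$-dimensional naturally graded $p$-filiform associative algebra over $\mathbb{C}$, identified with its natural grading $\mathcal{A}=\bigoplus_{i\geq 1}\mathcal{A}_i$. Suppose $\{e_1,\dots,e_{n-p},f_1,\dots,f_p\}$ is a basis of $\mathcal{A}$ such that $e_1\in\mathcal{A}_1$, $e_1e_i=e_{i+1}$ for $1\leq i\leq n-p-1$, $e_1e_{n-p}=0$, $e_1f_j=0$ for $1\leq j\leq p$, $e_i\in\mathcal{A}_i$ for $1\leq i\leq n-p$, and each $f_i$ is homogeneous with $f_i\in\mathcal{A}_{r_i}$, where $r_1\leq r_2\leq\dots\leq r_p\leq n-p$. Then $r_s\leq s$ for every $s\in\{1,2,\dots,p\}$.
   Context: All algebras are finite-dimensional associative algebras over $\mathbb{C}$. For an algebra $\mathcal{A}$ put $\mathcal{A}^1=\mathcal{A}$ and $\mathcal{A}^{i+1}=\sum_{k=1}^{i}\mathcal{A}^k\mathcal{A}^{i+1-k}$; $\mathcal{A}$ is nilpotent if $\mathcal{A}^i=0$ for some $i$. For nilpotent $\mathcal{A}$ with nilindex $k$ (i.e. $\mathcal{A}^k\neq 0=\mathcal{A}^{k+1}$), set $\mathcal{A}_i=\mathcal{A}^i/\mathcal{A}^{i+1}$ and $\operatorname{gr}\mathcal{A}=\mathcal{A}_1\oplus\dots\oplus\mathcal{A}_k$, a graded algebra with $\mathcal{A}_i\mathcal{A}_j\subseteq\mathcal{A}_{i+j}$; $\mathcal{A}$ is naturally graded if $\mathcal{A}\cong\operatorname{gr}\mathcal{A}$,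 in which case $\mathcal{A}$ is identified with $\bigoplus_i\mathcal{A}_i$ (so $\mathcal{A}_i\mathcal{A}_j\subseteq\mathcal{A}_{i+j}$ and $\mathcal{A}^m=\bigoplus_{i\geq m}\mathcal{A}_i$). For $x\in\mathcal{A}$, $L_x:\mathcal{A}\to\mathcal{A}$, $z\mapsto xz$. For $x\in\mathcal{A}\setminus\mathcal{A}^2$, $C(x)$ is the decreasing sequence of sizes of the Jordan blocks of $L_x$; sequences are ordered lexicographically, and the characteristic sequence is $C(\mathcal{A})=\max_{x\in\mathcal{A}\setminus\mathcal{A}^2}C(x)$. $\mathcal{A}$ is $p$-filiform if $C(\mathcal{A})=(n-p,1,\dots,1)$ (with $p$ entries equal to $1$), where $n=\dim\mathcal{A}$. *)

theory Defs
  imports "Jordan_Normal_Form.Jordan_Normal_Form"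
begin

text \<open>An n-dimensional algebra over the complex numbers is modelled on complex vectors of
  dimension n (coordinates w.r.t. a fixed basis), with multiplication given by structure
  constants gam i j k (the k-th coordinate of the product of the i-th and j-th basis vector).
  Such a multiplication is automatically bilinear; associativity is a separate hypothesis.\<close>

definition amul :: "nat \<Rightarrow> (nat \<Rightarrow> nat \<Rightarrow> nat \<Rightarrow> complex) \<Rightarrow> complex vec \<Rightarrow> complex vec \<Rightarrow> complex vec" where
  "amul n gam x y = vec n (\<lambda>k. \<Sum>i<n. \<Sum>j<n. x $ i * y $ j * gam i j k)"

definition is_assoc_alg :: "nat \<Rightarrow> (nat \<Rightarrow> nat \<Rightarrow> nat \<Rightarrow> complex) \<Rightarrow> bool" where
  "is_assoc_alg n gam \<longleftrightarrow>
     (\<forall>x\<in>carrier_vec n. \<forall>y\<in>carrier_vec n. \<forall>z\<in>carrier_vec n.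
        amul n gam (amul n gam x y) z = amul n gam x (amul n gam y z))"

definition vspan :: "nat \<Rightarrow> complex vec set \<Rightarrow> complex vec set" where
  "vspan n S = {v. \<exists>F c. finite F \<and> F \<subseteq> S \<and>
       v = finsum_vec TYPE(complex) n (\<lambda>u. c u \<cdot>\<^sub>v u) F}"

definition is_subspace :: "nat \<Rightarrow> complex vec set \<Rightarrow> bool" where
  "is_subspace n V \<longleftrightarrow> V \<subseteq> carrier_vec n \<and> vspan n V = V"

text \<open>Powers: A^1 = A, A^(i+1) = sum_{k=1}^{i} A^k A^(i+1-k); a sum of products of subspaces
  is the span of all the corresponding products.\<close>
function apow :: "nat \<Rightarrow> (nat \<Rightarrow> nat \<Rightarrow> nat \<Rightarrow> complex) \<Rightarrow> nat \<Rightarrow> complex vec set" where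
  "apow n gam i =
     (if i \<le> 1 then carrier_vec n
      else vspan n (\<Union>k\<in>{1..<i}. {amul n gam x y | x y. x \<in> apow n gam k \<and> y \<in> apow n gam (i - k)}))"
  by pat_completeness auto
termination
  by (relation "measure (\<lambda>(n, gam, i). i)") auto

declare apow.simps[simp del]

definition is_nilpotent_alg :: "nat \<Rightarrow> (nat \<Rightarrow> nat \<Rightarrow> nat \<Rightarrow> complex) \<Rightarrow> bool" where
  "is_nilpotent_alg n gam \<longleftrightarrow> (\<exists>i\<ge>1. apow n gam i = {0\<^sub>v n})"

text \<open>G is the natural grading with which the (naturally graded, nilpotent) algebra is identified:
  components G i (i \<ge> 1) are subspaces, G i G j \<subseteq> G (i+j), the sum of all G i is direct,
  and A^m = (direct sum of the G i with i \<ge> m) for every m \<ge> 1 (in particular A = sum of all G i).\<close>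
definition is_natural_grading :: "nat \<Rightarrow> (nat \<Rightarrow> nat \<Rightarrow> nat \<Rightarrow> complex) \<Rightarrow> (nat \<Rightarrow> complex vec set) \<Rightarrow> bool" where
  "is_natural_grading n gam G \<longleftrightarrow>
     (\<forall>i\<ge>1. is_subspace n (G i)) \<and>
     (\<forall>i\<ge>1. \<forall>j\<ge>1. \<forall>x\<in>G i. \<forall>y\<in>G j. amul n gam x y \<in> G (i + j)) \<and>
     (\<forall>F v. finite F \<and> F \<subseteq> {1..} \<and> (\<forall>i\<in>F. v i \<in> G i) \<and>
            finsum_vec TYPE(complex) n v F = 0\<^sub>v n \<longrightarrow> (\<forall>i\<in>F. v i = 0\<^sub>v n)) \<and>
     (\<forall>m\<ge>1. apow n gam m = vspan n (\<Union>i\<in>{m..}. G i))"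

definition Lmat :: "nat \<Rightarrow> (nat \<Rightarrow> nat \<Rightarrow> nat \<Rightarrow> complex) \<Rightarrow> complex vec \<Rightarrow> complex mat" where
  "Lmat n gam x = mat n n (\<lambda>(i, j). amul n gam x (unit_vec n j) $ i)"

definition jordan_sizes :: "complex mat \<Rightarrow> nat list" where
  "jordan_sizes M = (SOME cs. \<exists>n_as. jordan_nf M n_as \<and> cs = rev (sort (map fst n_as)))"

definition charseq_elt :: "nat \<Rightarrow> (nat \<Rightarrow> nat \<Rightarrow> nat \<Rightarrow> complex) \<Rightarrow> complex vec \<Rightarrow> nat list" where
  "charseq_elt n gam x = jordan_sizes (Lmat n gam x)"

text \<open>C(A) = lexicographic maximum of C(x) over x \<in> A \<setminus> A^2; p-filiform means
  C(A) = (n-p, 1, ..., 1) with p ones.\<close>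
definition is_p_filiform :: "nat \<Rightarrow> (nat \<Rightarrow> nat \<Rightarrow> nat \<Rightarrow> complex) \<Rightarrow> nat \<Rightarrow> bool" where
  "is_p_filiform n gam p \<longleftrightarrow>
     (let t = (n - p) # replicate p 1 in
       (\<exists>x\<in>carrier_vec n - apow n gam 2. charseq_elt n gam x = t) \<and>
       (\<forall>x\<in>carrier_vec n - apow n gam 2. lexordp_eq (charseq_elt n gam x) t))"

definition is_basis :: "nat \<Rightarrow> (nat \<Rightarrow> complex vec) \<Rightarrow> bool" where
  "is_basis n b \<longleftrightarrow>
     (\<forall>i<n. b i \<in> carrier_vec n) \<and>
     (\<forall>c. finsum_vec TYPE(complex) n (\<lambda>i. c i \<cdot>\<^sub>v b i) {..<n} = 0\<^sub>v n \<longrightarrow> (\<forall>i<n. c i = 0)) \<and>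
     (\<forall>v\<in>carrier_vec n. \<exists>c. v = finsum_vec TYPE(complex) n (\<lambda>i. c i \<cdot>\<^sub>v b i) {..<n})"

end

theory Submission
  imports Defs "Jordan_Normal_Form.VS_Connect"
begin

text \<open>
  Suppose r_s > s. The values r_1, ..., r_(s-1) miss some K in {1, ..., s}, and r_j \<ge> r_s > s \<ge> K
  for j \<ge> s, so e_K is the only basis vector of degree K. Let W_M be the span of e_M, ..., e_(n-p).
  Descending induction from the nilpotency index gives A^M \<subseteq> W_M for all M \<ge> K: A^K is spanned
  by e_K and A^(K+1), and for M > K associativity gives A^M = A^K A^(M-K), where
  e_K A^(M-K) = e_1 (e_(K-1) A^(M-K)) \<subseteq> e_1 A^(M-1) \<subseteq> W_M. Hence f_s \<in> A^(r_s) \<subseteq> W_K lies in the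
  span of the e_j, contradicting linear independence.
\<close>

section \<open>Subspaces of \<open>\<complex>\<^sup>n\<close>\<close>

interpretation V: vec_module "TYPE(complex)" n for n .

lemma vspan_eq_span: "vspan n S = V.span n S"
  unfolding vspan_def V.span_def V.lincomb_def vec_space.finsum_vec by auto

lemma is_subspace_iff_submodule:
  "is_subspace n N \<longleftrightarrow> LinearCombinations.submodule class_ring N (V.V n)"
proof
  assume "is_subspace n N"
  then show "LinearCombinations.submodule class_ring N (V.V n)"
    unfolding is_subspace_def vspan_eq_span by (metis V.span_is_submodule)
next
  assume N: "LinearCombinations.submodule class_ring N (V.V n)"
  then have "N \<subseteq> carrier_vec n"
    unfolding LinearCombinations.submodule_def by (simp add: module_vec_simps)
  with N show "is_subspace n N"
    unfolding is_subspace_def vspan_eq_span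
    by (metis V.in_own_span V.span_is_subset order_refl subset_antisym)
qed

lemma is_subspaceI:
  assumes "N \<subseteq> carrier_vec n" "0\<^sub>v n \<in> N"
    and "\<And>u v. u \<in> N \<Longrightarrow> v \<in> N \<Longrightarrow> u + v \<in> N"
    and "\<And>a v. v \<in> N \<Longrightarrow> a \<cdot>\<^sub>v v \<in> N"
  shows "is_subspace n N"
  unfolding is_subspace_iff_submodule LinearCombinations.submodule_def
  using assms vec_module by (auto simp: module_vec_simps)

lemma
  assumes "is_subspace n N"
  shows subspace_subset_carrier: "N \<subseteq> carrier_vec n"
    and subspace_zero: "0\<^sub>v n \<in> N"
    and subspace_add: "u \<in> N \<Longrightarrow> v \<in> N \<Longrightarrow> u + v \<in> N"
    and subspace_smult: "v \<in> N \<Longrightarrow> a \<cdot>\<^sub>v v \<in> N"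
  using assms unfolding is_subspace_iff_submodule LinearCombinations.submodule_def
  by (auto simp: module_vec_simps)

lemma is_subspace_vspan: "S \<subseteq> carrier_vec n \<Longrightarrow> is_subspace n (vspan n S)"
  unfolding is_subspace_iff_submodule vspan_eq_span by (rule V.span_is_submodule)

lemma vspan_minimal: "S \<subseteq> N \<Longrightarrow> is_subspace n N \<Longrightarrow> vspan n S \<subseteq> N"
  unfolding is_subspace_iff_submodule vspan_eq_span by (rule V.span_is_subset)

lemma vspan_superset: "S \<subseteq> carrier_vec n \<Longrightarrow> S \<subseteq> vspan n S"
  unfolding vspan_eq_span by (rule V.in_own_span)

lemma vspan_mono: "S \<subseteq> T \<Longrightarrow> vspan n S \<subseteq> vspan n T"
  unfolding vspan_eq_span by (rule V.span_is_monotone)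

lemma vspan_subset_carrier: "S \<subseteq> carrier_vec n \<Longrightarrow> vspan n S \<subseteq> carrier_vec n"
  unfolding vspan_eq_span by (rule V.span_is_subset2)

lemma subspace_finsum_smult:
  assumes "is_subspace n N" "finite I" "\<And>t. t \<in> I \<Longrightarrow> w t \<in> N"
  shows "finsum_vec TYPE(complex) n (\<lambda>t. c t \<cdot>\<^sub>v w t) I \<in> N"
  using assms(2,3)
proof (induction I rule: finite_induct)
  case empty
  then show ?case using subspace_zero[OF assms(1)] by (simp add: finsum_vec_empty)
next
  case (insert t I)
  have "w ` insert t I \<subseteq> carrier_vec n"
    using insert.prems subspace_subset_carrier[OF assms(1)] by blast
  then have "finsum_vec TYPE(complex) n (\<lambda>t. c t \<cdot>\<^sub>v w t) (insert t I)
      = c t \<cdot>\<^sub>v w t + finsum_vec TYPE(complex) n (\<lambda>t. c t \<cdot>\<^sub>v w t) I"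
    using insert.hyps by (intro finsum_vec_insert) auto
  then show ?case
    using insert assms(1) by (simp add: subspace_add subspace_smult)
qed

lemma index_finsum_smult:
  assumes "finite I" "\<And>t. t \<in> I \<Longrightarrow> w t \<in> carrier_vec n" "k < n"
  shows "finsum_vec TYPE('a :: semiring_0) n (\<lambda>t. c t \<cdot>\<^sub>v w t) I $ k = (\<Sum>t\<in>I. c t * w t $ k)"
  using assms by (subst index_finsum_vec) (auto intro!: sum.cong simp: carrier_vecD[OF assms(2)])

lemma finsum_smult_carrier:
  assumes "\<And>t. t \<in> I \<Longrightarrow> w t \<in> carrier_vec n"
  shows "finsum_vec TYPE('a :: semiring_0) n (\<lambda>t. c t \<cdot>\<^sub>v w t) I \<in> carrier_vec n"
  using assms by (intro finsum_vec_closed) auto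

lemma vec_eq_of_add_neg:
  fixes a b :: "'a :: comm_ring_1 vec"
  assumes "a \<in> carrier_vec n" "b \<in> carrier_vec n" "a + (-1) \<cdot>\<^sub>v b = 0\<^sub>v n"
  shows "a = b"
proof (rule eq_vecI)
  fix k assume "k < dim_vec b"
  then have k: "k < n" using assms(2) by simp
  have "(a + (-1) \<cdot>\<^sub>v b) $ k = 0" using assms(3) k by simp
  then show "a $ k = b $ k" using k assms(1,2) by simp
qed (use assms in simp)

lemma finsum_smult_group:
  assumes "finite I" "finite D" "g ` I \<subseteq> D" "\<And>t. t \<in> I \<Longrightarrow> w t \<in> carrier_vec n"
  shows "finsum_vec TYPE('a :: semiring_0) n (\<lambda>t. c t \<cdot>\<^sub>v w t) I =
    finsum_vec TYPE('a) n (\<lambda>d. finsum_vec TYPE('a) n (\<lambda>t. c t \<cdot>\<^sub>v w t) {t \<in> I. g t = d}) D"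
    (is "?lhs = finsum_vec TYPE('a) n ?part D")
proof -
  have part: "?part d \<in> carrier_vec n" for d
    using assms(4) by (intro finsum_smult_carrier) auto
  have "?lhs \<in> carrier_vec n" "finsum_vec TYPE('a) n ?part D \<in> carrier_vec n"
    using assms(4) part by (auto intro!: finsum_smult_carrier finsum_vec_closed)
  moreover have "?lhs $ k = finsum_vec TYPE('a) n ?part D $ k" if k: "k < n" for k
  proof -
    have "finsum_vec TYPE('a) n ?part D $ k = (\<Sum>d\<in>D. ?part d $ k)"
      using assms(2) k part by (intro index_finsum_vec) auto
    also have "\<dots> = (\<Sum>d\<in>D. \<Sum>t\<in>{t \<in> I. g t = d}. c t * w t $ k)"
      using assms k by (intro sum.cong refl index_finsum_smult) auto
    also have "\<dots> = (\<Sum>t\<in>I. c t * w t $ k)"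
      using assms by (intro sum.group) auto
    finally show ?thesis
      using assms k by (simp add: index_finsum_smult)
  qed
  ultimately show ?thesis by (intro eq_vecI) auto
qed

abbreviation basis_comb :: "nat \<Rightarrow> (nat \<Rightarrow> complex vec) \<Rightarrow> (nat \<Rightarrow> complex) \<Rightarrow> complex vec"
  where "basis_comb n B c \<equiv> finsum_vec TYPE(complex) n (\<lambda>t. c t \<cdot>\<^sub>v B t) {..<n}"

lemma
  assumes "is_basis n B"
  shows basis_carrier_vec: "t < n \<Longrightarrow> B t \<in> carrier_vec n"
    and basis_comb_eq_0D: "basis_comb n B c = 0\<^sub>v n \<Longrightarrow> t < n \<Longrightarrow> c t = 0"
    and basis_spans: "v \<in> carrier_vec n \<Longrightarrow> \<exists>c. v = basis_comb n B c"
  using assms unfolding is_basis_def by simp_all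

context
  fixes n :: nat and B :: "nat \<Rightarrow> complex vec"
  assumes B: "\<And>t. t < n \<Longrightarrow> B t \<in> carrier_vec n"
begin

lemma basis_comb_carrier: "basis_comb n B c \<in> carrier_vec n"
  using B by (intro finsum_smult_carrier) auto

lemma basis_comb_dim: "dim_vec (basis_comb n B c) = n"
  using basis_comb_carrier[of c] by (rule carrier_vecD)

lemma index_basis_comb: "k < n \<Longrightarrow> basis_comb n B c $ k = (\<Sum>t<n. c t * B t $ k)"
  using B by (intro index_finsum_smult) auto

lemma basis_comb_unit:
  assumes "j < n"
  shows "basis_comb n B (\<lambda>t. if t = j then 1 else 0) = B j"
proof (rule eq_vecI)
  have "B j \<in> carrier_vec n" using B assms .
  then show "dim_vec (basis_comb n B (\<lambda>t. if t = j then 1 else 0)) = dim_vec (B j)"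
    by (simp add: basis_comb_dim)
  fix k assume "k < dim_vec (B j)"
  with \<open>B j \<in> carrier_vec n\<close> have "k < n" by simp
  then show "basis_comb n B (\<lambda>t. if t = j then 1 else 0) $ k = B j $ k"
    using assms by (simp add: index_basis_comb if_distrib[of "\<lambda>x. x * _"] cong: if_cong)
qed

lemma vspan_subset_basis_combs:
  assumes "I \<subseteq> {..<n}"
  shows "vspan n (B ` I) \<subseteq> {basis_comb n B c | c. \<forall>t. t \<notin> I \<longrightarrow> c t = 0}"
    (is "_ \<subseteq> ?T")
proof (rule vspan_minimal)
  show "B ` I \<subseteq> ?T"
  proof
    fix v assume "v \<in> B ` I"
    then obtain j where j: "j \<in> I" "v = B j" by blast
    then have "v = basis_comb n B (\<lambda>t. if t = j then 1 else 0)"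
      using assms basis_comb_unit by auto
    then show "v \<in> ?T" using j(1) by force
  qed
  show "is_subspace n ?T"
  proof (rule is_subspaceI)
    show "?T \<subseteq> carrier_vec n" using basis_comb_carrier by blast
    have "0\<^sub>v n = basis_comb n B (\<lambda>_. 0)"
      by (rule eq_vecI) (simp_all add: basis_comb_dim index_basis_comb)
    then show "0\<^sub>v n \<in> ?T" by force
  next
    fix u v assume "u \<in> ?T" "v \<in> ?T"
    then obtain c d where cd: "u = basis_comb n B c" "v = basis_comb n B d"
      "\<forall>t. t \<notin> I \<longrightarrow> c t = 0" "\<forall>t. t \<notin> I \<longrightarrow> d t = 0"
      by blast
    have "u + v = basis_comb n B (\<lambda>t. c t + d t)"
      unfolding cd
      by (rule eq_vecI) (simp_all add: basis_comb_dim index_basis_comb sum.distrib distrib_right)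
    then show "u + v \<in> ?T" using cd by force
  next
    fix a v assume "v \<in> ?T"
    then obtain c where c: "v = basis_comb n B c" "\<forall>t. t \<notin> I \<longrightarrow> c t = 0"
      by blast
    have "a \<cdot>\<^sub>v v = basis_comb n B (\<lambda>t. a * c t)"
      unfolding c
      by (rule eq_vecI) (simp_all add: basis_comb_dim index_basis_comb sum_distrib_left mult.assoc)
    then show "a \<cdot>\<^sub>v v \<in> ?T" using c by force
  qed
qed

end

lemma basis_comb_inj:
  assumes basis: "is_basis n B" and eq: "basis_comb n B c = basis_comb n B d" and "t < n"
  shows "c t = d t"
proof -
  note B = basis_carrier_vec[OF basis]
  have "basis_comb n B (\<lambda>t. c t - d t) = 0\<^sub>v n"
  proof (rule eq_vecI)
    fix k assume "k < dim_vec (0\<^sub>v n :: complex vec)"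
    then have k: "k < n" by simp
    have "basis_comb n B (\<lambda>t. c t - d t) $ k = basis_comb n B c $ k - basis_comb n B d $ k"
      using k by (simp add: index_basis_comb[OF B] left_diff_distrib sum_subtractf)
    then show "basis_comb n B (\<lambda>t. c t - d t) $ k = 0\<^sub>v n $ k"
      using eq k by simp
  qed (simp add: basis_comb_dim[OF B])
  then have "c t - d t = 0"
    using basis_comb_eq_0D[OF basis, of "\<lambda>t. c t - d t" t] \<open>t < n\<close> by simp
  then show ?thesis by simp
qed

lemma basis_vec_notin_vspan:
  assumes basis: "is_basis n B" and "I \<subseteq> {..<n}" "j < n" "j \<notin> I"
  shows "B j \<notin> vspan n (B ` I)"
proof
  note B = basis_carrier_vec[OF basis]
  assume "B j \<in> vspan n (B ` I)"
  then obtain c where c: "B j = basis_comb n B c" "\<forall>t. t \<notin> I \<longrightarrow> c t = 0"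
    using vspan_subset_basis_combs[of n B, OF B \<open>I \<subseteq> {..<n}\<close>] by blast
  have "basis_comb n B (\<lambda>t. if t = j then 1 else 0) = basis_comb n B c"
    using basis_comb_unit[of n B, OF B \<open>j < n\<close>] c(1) by simp
  from basis_comb_inj[OF basis this \<open>j < n\<close>] show False
    using c(2) \<open>j \<notin> I\<close> by simp
qed

section \<open>Multiplication and the powers \<open>A\<^sup>i\<close>\<close>

lemma amul_carrier [simp]: "amul n gam x y \<in> carrier_vec n"
  by (simp add: amul_def)

lemma amul_zero_left [simp]: "amul n gam (0\<^sub>v n) y = 0\<^sub>v n"
  by (rule eq_vecI) (simp_all add: amul_def)

lemma amul_zero_right [simp]: "amul n gam x (0\<^sub>v n) = 0\<^sub>v n"
  by (rule eq_vecI) (simp_all add: amul_def)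

lemma amul_add_left:
  "x \<in> carrier_vec n \<Longrightarrow> x' \<in> carrier_vec n \<Longrightarrow>
    amul n gam (x + x') y = amul n gam x y + amul n gam x' y"
  by (rule eq_vecI) (auto simp: amul_def algebra_simps sum.distrib intro!: sum.cong)

lemma amul_add_right:
  "y \<in> carrier_vec n \<Longrightarrow> y' \<in> carrier_vec n \<Longrightarrow>
    amul n gam x (y + y') = amul n gam x y + amul n gam x y'"
  by (rule eq_vecI) (auto simp: amul_def algebra_simps sum.distrib intro!: sum.cong)

lemma amul_smult_left:
  "x \<in> carrier_vec n \<Longrightarrow> amul n gam (a \<cdot>\<^sub>v x) y = a \<cdot>\<^sub>v amul n gam x y"
  by (rule eq_vecI) (auto simp: amul_def algebra_simps sum_distrib_left intro!: sum.cong)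

lemma amul_smult_right:
  "y \<in> carrier_vec n \<Longrightarrow> amul n gam x (a \<cdot>\<^sub>v y) = a \<cdot>\<^sub>v amul n gam x y"
  by (rule eq_vecI) (auto simp: amul_def algebra_simps sum_distrib_left intro!: sum.cong)

lemma amul_vspan_left:
  assumes "X \<subseteq> carrier_vec n" "is_subspace n T" "\<And>x. x \<in> X \<Longrightarrow> amul n gam x y \<in> T"
    and "x \<in> vspan n X"
  shows "amul n gam x y \<in> T"
proof -
  have "is_subspace n {x \<in> carrier_vec n. amul n gam x y \<in> T}"
    using assms(2)
    by (intro is_subspaceI)
      (auto simp: amul_add_left amul_smult_left subspace_zero subspace_add subspace_smult)
  then have "vspan n X \<subseteq> {x \<in> carrier_vec n. amul n gam x y \<in> T}"
    using assms(1,3) by (intro vspan_minimal) auto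
  then show ?thesis using assms(4) by blast
qed

lemma amul_vspan_right:
  assumes "Y \<subseteq> carrier_vec n" "is_subspace n T" "\<And>y. y \<in> Y \<Longrightarrow> amul n gam x y \<in> T"
    and "y \<in> vspan n Y"
  shows "amul n gam x y \<in> T"
proof -
  have "is_subspace n {y \<in> carrier_vec n. amul n gam x y \<in> T}"
    using assms(2)
    by (intro is_subspaceI)
      (auto simp: amul_add_right amul_smult_right subspace_zero subspace_add subspace_smult)
  then have "vspan n Y \<subseteq> {y \<in> carrier_vec n. amul n gam x y \<in> T}"
    using assms(1,3) by (intro vspan_minimal) auto
  then show ?thesis using assms(4) by blast
qed

lemma amul_assoc:
  "is_assoc_alg n gam \<Longrightarrow> x \<in> carrier_vec n \<Longrightarrow> y \<in> carrier_vec n \<Longrightarrow> z \<in> carrier_vec n \<Longrightarrow>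
    amul n gam (amul n gam x y) z = amul n gam x (amul n gam y z)"
  unfolding is_assoc_alg_def by blast

definition products ::
    "nat \<Rightarrow> (nat \<Rightarrow> nat \<Rightarrow> nat \<Rightarrow> complex) \<Rightarrow> complex vec set \<Rightarrow> complex vec set \<Rightarrow> complex vec set"
  where "products n gam X Y = {amul n gam x y | x y. x \<in> X \<and> y \<in> Y}"

lemma products_subset_carrier: "products n gam X Y \<subseteq> carrier_vec n"
  unfolding products_def by auto

lemma amul_in_products: "x \<in> X \<Longrightarrow> y \<in> Y \<Longrightarrow> amul n gam x y \<in> products n gam X Y"
  unfolding products_def by blast

lemma apow_eq_vspan_products:
  "1 < i \<Longrightarrow> apow n gam i = vspan n (\<Union>k\<in>{1..<i}. products n gam (apow n gam k) (apow n gam (i - k)))"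
  unfolding products_def by (subst apow.simps) simp

lemma apow_subset_carrier: "apow n gam i \<subseteq> carrier_vec n"
proof (cases "1 < i")
  case True
  then show ?thesis
    by (simp add: apow_eq_vspan_products vspan_subset_carrier UN_least products_subset_carrier)
qed (simp add: apow.simps)

lemma apow_mul:
  assumes "1 \<le> a" "1 \<le> b" "x \<in> apow n gam a" "y \<in> apow n gam b"
  shows "amul n gam x y \<in> apow n gam (a + b)"
proof -
  have "amul n gam x y \<in> products n gam (apow n gam a) (apow n gam (a + b - a))"
    using assms by (simp add: amul_in_products)
  then show ?thesis
    using assms vspan_superset[OF UN_least[OF products_subset_carrier]]
    by (subst apow_eq_vspan_products) force+
qed

lemma products_regroup_left:
  assumes assoc: "is_assoc_alg n gam"
    and x: "x \<in> vspan n (products n gam (apow n gam k) (apow n gam a))"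
    and y: "y \<in> apow n gam b" and "1 \<le> a" "1 \<le> b"
  shows "amul n gam x y \<in> vspan n (products n gam (apow n gam k) (apow n gam (a + b)))"
proof (rule amul_vspan_left[OF products_subset_carrier is_subspace_vspan[OF products_subset_carrier]
      _ x])
  fix u assume "u \<in> products n gam (apow n gam k) (apow n gam a)"
  then obtain u1 u2 where u: "u = amul n gam u1 u2" "u1 \<in> apow n gam k" "u2 \<in> apow n gam a"
    unfolding products_def by blast
  then have "amul n gam u y = amul n gam u1 (amul n gam u2 y)"
    using y apow_subset_carrier by (auto intro!: amul_assoc[OF assoc])
  moreover have "amul n gam u2 y \<in> apow n gam (a + b)"
    using u y assms by (intro apow_mul) auto
  ultimately have "amul n gam u y \<in> products n gam (apow n gam k) (apow n gam (a + b))"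
    using u(2) amul_in_products by metis
  then show "amul n gam u y \<in> vspan n (products n gam (apow n gam k) (apow n gam (a + b)))"
    using vspan_superset[OF products_subset_carrier] by blast
qed

lemma products_regroup_right:
  assumes assoc: "is_assoc_alg n gam"
    and x: "x \<in> apow n gam a" and y: "y \<in> vspan n (products n gam (apow n gam c) (apow n gam d))"
    and "1 \<le> a" "1 \<le> c"
  shows "amul n gam x y \<in> vspan n (products n gam (apow n gam (a + c)) (apow n gam d))"
proof (rule amul_vspan_right[OF products_subset_carrier is_subspace_vspan[OF products_subset_carrier]
      _ y])
  fix u assume "u \<in> products n gam (apow n gam c) (apow n gam d)"
  then obtain u1 u2 where u: "u = amul n gam u1 u2" "u1 \<in> apow n gam c" "u2 \<in> apow n gam d"
    unfolding products_def by blast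
  then have "amul n gam x u = amul n gam (amul n gam x u1) u2"
    using x apow_subset_carrier by (auto intro!: amul_assoc[OF assoc, symmetric])
  moreover have "amul n gam x u1 \<in> apow n gam (a + c)"
    using u x assms by (intro apow_mul) auto
  ultimately have "amul n gam x u \<in> products n gam (apow n gam (a + c)) (apow n gam d)"
    using u(3) amul_in_products by metis
  then show "amul n gam x u \<in> vspan n (products n gam (apow n gam (a + c)) (apow n gam d))"
    using vspan_superset[OF products_subset_carrier] by blast
qed

text \<open>Strong induction on \<open>M\<close>: in a generator \<open>x y\<close> of \<open>A\<^sup>M\<close> with \<open>x \<in> A\<^sup>a\<close>, split \<open>x\<close>
  (if \<open>k < a\<close>) or \<open>y\<close> (if \<open>a < k\<close>) by the induction hypothesis and regroup.\<close>
lemma apow_subset_vspan_products: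
  assumes assoc: "is_assoc_alg n gam" and "1 \<le> k" "k < M"
  shows "apow n gam M \<subseteq> vspan n (products n gam (apow n gam k) (apow n gam (M - k)))"
  using assms(2,3)
proof (induction M arbitrary: k rule: less_induct)
  case (less M)
  let ?S = "\<lambda>k l. vspan n (products n gam (apow n gam k) (apow n gam l))"
  have "amul n gam x y \<in> ?S k (M - k)" if a: "1 \<le> a" "a < M" and x: "x \<in> apow n gam a"
    and y: "y \<in> apow n gam (M - a)" for a x y
  proof -
    consider "a = k" | "k < a" | "a < k" by linarith
    then show ?thesis
    proof cases
      case 1
      then show ?thesis
        using x y vspan_superset[OF products_subset_carrier] amul_in_products by blast
    next
      case 2
      have "apow n gam a \<subseteq> ?S k (a - k)"
        by (rule less.IH) (use a 2 less.prems in auto)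
      then have "amul n gam x y \<in> ?S k (a - k + (M - a))"
        using x y a 2 by (intro products_regroup_left[OF assoc]) auto
      moreover have "a - k + (M - a) = M - k" using a 2 by simp
      ultimately show ?thesis by simp
    next
      case 3
      have "apow n gam (M - a) \<subseteq> ?S (k - a) (M - a - (k - a))"
        by (rule less.IH) (use a 3 less.prems in auto)
      then have "amul n gam x y \<in> ?S (a + (k - a)) (M - a - (k - a))"
        using x y a 3 by (intro products_regroup_right[OF assoc]) auto
      moreover have "a + (k - a) = k" "M - a - (k - a) = M - k" using a 3 less.prems by auto
      ultimately show ?thesis by simp
    qed
  qed
  then have "(\<Union>a\<in>{1..<M}. products n gam (apow n gam a) (apow n gam (M - a))) \<subseteq> ?S k (M - k)"
    unfolding products_def by force
  then show ?case
    using less.prems vspan_minimal[OF _ is_subspace_vspan[OF products_subset_carrier]]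
    by (subst apow_eq_vspan_products) simp_all
qed

section \<open>Naturally graded algebras with a homogeneous basis\<close>

locale graded_algebra =
  fixes n :: nat and gam :: "nat \<Rightarrow> nat \<Rightarrow> nat \<Rightarrow> complex" and G :: "nat \<Rightarrow> complex vec set"
  assumes assoc: "is_assoc_alg n gam"
    and nilpotent: "is_nilpotent_alg n gam"
    and grading: "is_natural_grading n gam G"
begin

lemma component_subspace: "1 \<le> i \<Longrightarrow> is_subspace n (G i)"
  using grading unfolding is_natural_grading_def by simp

lemma components_independent:
  assumes "finite F" "F \<subseteq> {1..}" "\<And>i. i \<in> F \<Longrightarrow> v i \<in> G i"
    and "finsum_vec TYPE(complex) n v F = 0\<^sub>v n" "i \<in> F"
  shows "v i = 0\<^sub>v n"
proof -
  have "\<forall>F v. finite F \<and> F \<subseteq> {1..} \<and> (\<forall>i\<in>F. v i \<in> G i) \<and>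
      finsum_vec TYPE(complex) n v F = 0\<^sub>v n \<longrightarrow> (\<forall>i\<in>F. v i = 0\<^sub>v n)"
    using grading unfolding is_natural_grading_def by simp
  then show ?thesis using assms by blast
qed

lemma component_eq_of_finsum:
  assumes D: "finite D" "D \<subseteq> {1..}" "i \<in> D" and y: "\<And>d. d \<in> D \<Longrightarrow> y d \<in> G d"
    and x: "x \<in> G i" "x = finsum_vec TYPE(complex) n y D"
  shows "y i = x"
proof -
  define v where "v d = (if d = i then y d + (-1) \<cdot>\<^sub>v x else y d)" for d
  have sub: "is_subspace n (G d)" if "d \<in> D" for d
    using that D(2) component_subspace by auto
  have y_carrier: "y d \<in> carrier_vec n" if "d \<in> D" for d
    using subspace_subset_carrier[OF sub[OF that]] y[OF that] by blast
  have x_carrier: "x \<in> carrier_vec n"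
    using subspace_subset_carrier[OF sub[OF D(3)]] x(1) by blast
  have v: "v d \<in> G d" if "d \<in> D" for d
    using y[OF that] x(1) sub[OF that]
    by (cases "d = i") (simp_all add: v_def subspace_add subspace_smult)
  have v_carrier: "v d \<in> carrier_vec n" if "d \<in> D" for d
    using subspace_subset_carrier[OF sub[OF that]] v[OF that] by blast
  have "finsum_vec TYPE(complex) n v D = 0\<^sub>v n"
  proof (rule eq_vecI)
    fix k assume "k < dim_vec (0\<^sub>v n :: complex vec)"
    then have k: "k < n" by simp
    have "finsum_vec TYPE(complex) n v D $ k = (\<Sum>d\<in>D. v d $ k)"
      using D(1) k v_carrier by (intro index_finsum_vec) auto
    also have "\<dots> = (\<Sum>d\<in>D. y d $ k - (if d = i then x $ k else 0))"
      using k y_carrier x_carrier by (intro sum.cong) (auto simp: v_def)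
    also have "\<dots> = (\<Sum>d\<in>D. y d $ k) - x $ k"
      using D(1,3) by (simp add: sum_subtractf)
    also have "(\<Sum>d\<in>D. y d $ k) = x $ k"
      unfolding x(2) using D(1) k y_carrier by (intro index_finsum_vec[symmetric]) auto
    finally show "finsum_vec TYPE(complex) n v D $ k = 0\<^sub>v n $ k" using k by simp
  next
    have "finsum_vec TYPE(complex) n v D \<in> carrier_vec n"
      using v_carrier by (intro finsum_vec_closed) auto
    then show "dim_vec (finsum_vec TYPE(complex) n v D) = dim_vec (0\<^sub>v n :: complex vec)"
      by simp
  qed
  then have "v i = 0\<^sub>v n"
    using components_independent[OF D(1,2) v] D(3) by blast
  then have "y i + (-1) \<cdot>\<^sub>v x = 0\<^sub>v n"
    by (simp add: v_def)
  then show "y i = x"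
    using y_carrier[OF D(3)] x_carrier by (rule vec_eq_of_add_neg[rotated 2])
qed

lemma apow_eq_vspan_components: "1 \<le> m \<Longrightarrow> apow n gam m = vspan n (\<Union>i\<in>{m..}. G i)"
  using grading unfolding is_natural_grading_def by simp

lemma components_subset_carrier: "1 \<le> m \<Longrightarrow> (\<Union>i\<in>{m..}. G i) \<subseteq> carrier_vec n"
  by (intro UN_least subspace_subset_carrier component_subspace) auto

lemma component_subset_apow:
  assumes "1 \<le> m" "m \<le> i"
  shows "G i \<subseteq> apow n gam m"
proof -
  have "G i \<subseteq> (\<Union>i\<in>{m..}. G i)" using assms(2) by auto
  also have "\<dots> \<subseteq> vspan n (\<Union>i\<in>{m..}. G i)"
    by (rule vspan_superset[OF components_subset_carrier[OF assms(1)]])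
  finally show ?thesis by (simp add: apow_eq_vspan_components[OF assms(1)])
qed

lemma apow_antimono:
  assumes "1 \<le> m" "m \<le> M"
  shows "apow n gam M \<subseteq> apow n gam m"
proof -
  have "1 \<le> M" using assms by simp
  show ?thesis
    unfolding apow_eq_vspan_components[OF assms(1)] apow_eq_vspan_components[OF \<open>1 \<le> M\<close>]
    by (rule vspan_mono) (use assms(2) in force)
qed

lemma apow_eventually_zero: "\<exists>i0. \<forall>M\<ge>i0. apow n gam M \<subseteq> {0\<^sub>v n}"
proof -
  obtain i0 where i0: "1 \<le> i0" "apow n gam i0 = {0\<^sub>v n}"
    using nilpotent unfolding is_nilpotent_alg_def by blast
  then have "apow n gam M \<subseteq> {0\<^sub>v n}" if "i0 \<le> M" for M
    using apow_antimono[OF i0(1) that] by simp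
  then show ?thesis by blast
qed

end

locale homogeneous_basis = graded_algebra +
  fixes B :: "nat \<Rightarrow> complex vec" and dg :: "nat \<Rightarrow> nat"
  assumes basis: "is_basis n B"
    and degree_pos: "t < n \<Longrightarrow> 1 \<le> dg t"
    and homogeneous: "t < n \<Longrightarrow> B t \<in> G (dg t)"
begin

lemma basis_carrier: "t < n \<Longrightarrow> B t \<in> carrier_vec n"
  by (rule basis_carrier_vec[OF basis])

lemma basis_in_apow: "t < n \<Longrightarrow> 1 \<le> m \<Longrightarrow> m \<le> dg t \<Longrightarrow> B t \<in> apow n gam m"
  using homogeneous component_subset_apow by blast

text \<open>Grouping the basis expansion of \<open>x \<in> G\<^sub>i\<close> by degree writes \<open>x\<close> as a sum of homogeneous
  parts, and by independence of the components \<open>x\<close> is its part of degree \<open>i\<close>.\<close>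
lemma component_subset_vspan_basis:
  assumes i: "1 \<le> i" and x: "x \<in> G i"
  shows "x \<in> vspan n (B ` {t. t < n \<and> dg t = i})"
proof -
  have "x \<in> carrier_vec n"
    using x subspace_subset_carrier[OF component_subspace[OF i]] by blast
  then obtain c where c: "x = basis_comb n B c"
    using basis_spans[OF basis] by blast
  define part where
    "part d = finsum_vec TYPE(complex) n (\<lambda>t. c t \<cdot>\<^sub>v B t) {t \<in> {..<n}. dg t = d}" for d
  define D where "D = insert i (dg ` {..<n})"
  have D: "finite D" "D \<subseteq> {1..}" "i \<in> D"
    unfolding D_def using i degree_pos by auto
  have "x = finsum_vec TYPE(complex) n part D"
    unfolding c part_def D_def using basis_carrier by (intro finsum_smult_group) auto
  moreover have "part d \<in> G d" if "d \<in> D" for d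
    unfolding part_def using homogeneous D(2) that
    by (intro subspace_finsum_smult[OF component_subspace]) auto
  ultimately have "part i = x"
    using component_eq_of_finsum[OF D, of part x] x by blast
  moreover have carrier: "B ` {t. t < n \<and> dg t = i} \<subseteq> carrier_vec n"
    using basis_carrier by blast
  ultimately show ?thesis
    unfolding part_def using vspan_superset[OF carrier]
    by (auto intro!: subspace_finsum_smult[OF is_subspace_vspan[OF carrier]])
qed

lemma apow_subset_vspan_basis:
  assumes m: "1 \<le> m"
  shows "apow n gam m \<subseteq> vspan n (B ` {t. t < n \<and> m \<le> dg t})"
proof -
  have carrier: "B ` {t. t < n \<and> m \<le> dg t} \<subseteq> carrier_vec n"
    using basis_carrier by blast
  have "G i \<subseteq> vspan n (B ` {t. t < n \<and> m \<le> dg t})" if "m \<le> i" for i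
  proof
    fix x assume "x \<in> G i"
    then have "x \<in> vspan n (B ` {t. t < n \<and> dg t = i})"
      using m that by (intro component_subset_vspan_basis) auto
    also have "\<dots> \<subseteq> vspan n (B ` {t. t < n \<and> m \<le> dg t})"
      using that by (intro vspan_mono) auto
    finally show "x \<in> vspan n (B ` {t. t < n \<and> m \<le> dg t})" .
  qed
  then have "(\<Union>i\<in>{m..}. G i) \<subseteq> vspan n (B ` {t. t < n \<and> m \<le> dg t})"
    by blast
  then show ?thesis
    unfolding apow_eq_vspan_components[OF m]
    by (rule vspan_minimal[OF _ is_subspace_vspan[OF carrier]])
qed

end

text \<open>The chain \<open>e\<^sub>1, ..., e\<^sub>N\<close> of the theorem is \<open>B 0, ..., B (N - 1)\<close> (indices shifted by one),
  and \<open>chain_tail m\<close> is the span of \<open>e\<^sub>m, ..., e\<^sub>N\<close>.\<close>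
locale chain_basis = homogeneous_basis +
  fixes N :: nat
  assumes chain_length: "N \<le> n"
    and chain_degree: "t < N \<Longrightarrow> dg t = Suc t"
    and chain_mul: "t < n \<Longrightarrow> amul n gam (B 0) (B t) = (if Suc t < N then B (Suc t) else 0\<^sub>v n)"
begin

definition chain_tail :: "nat \<Rightarrow> complex vec set"
  where "chain_tail m = vspan n (B ` {t. t < N \<and> m \<le> Suc t})"

lemma chain_tail_subspace: "is_subspace n (chain_tail m)"
  unfolding chain_tail_def using chain_length basis_carrier by (intro is_subspace_vspan) auto

lemma chain_tail_antimono: "m \<le> m' \<Longrightarrow> chain_tail m' \<subseteq> chain_tail m"
  unfolding chain_tail_def by (intro vspan_mono) auto

lemma basis_in_chain_tail:
  assumes "t < N" "m \<le> Suc t"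
  shows "B t \<in> chain_tail m"
proof -
  have "B ` {t. t < N \<and> m \<le> Suc t} \<subseteq> carrier_vec n"
    using chain_length basis_carrier by auto
  then show ?thesis
    unfolding chain_tail_def using vspan_superset assms by blast
qed

lemma chain_head_mul_apow:
  assumes "1 \<le> b" "y \<in> apow n gam b"
  shows "amul n gam (B 0) y \<in> chain_tail (Suc b)"
proof (rule amul_vspan_right[OF _ chain_tail_subspace])
  show "B ` {t. t < n \<and> b \<le> dg t} \<subseteq> carrier_vec n" using basis_carrier by blast
  show "y \<in> vspan n (B ` {t. t < n \<and> b \<le> dg t})"
    using apow_subset_vspan_basis assms by blast
next
  fix y assume "y \<in> B ` {t. t < n \<and> b \<le> dg t}"
  then obtain t where t: "t < n" "b \<le> dg t" "y = B t" by blast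
  show "amul n gam (B 0) y \<in> chain_tail (Suc b)"
  proof (cases "Suc t < N")
    case True
    then have "amul n gam (B 0) y = B (Suc t)" using t chain_mul by simp
    moreover have "Suc b \<le> Suc (Suc t)" using t(2) chain_degree[of t] True by simp
    ultimately show ?thesis using True basis_in_chain_tail by simp
  next
    case False
    then have "amul n gam (B 0) y = 0\<^sub>v n" using t chain_mul by simp
    then show ?thesis using subspace_zero[OF chain_tail_subspace] by simp
  qed
qed

lemma chain_mul_apow:
  assumes t: "t < N" and b: "1 \<le> b" "y \<in> apow n gam b"
  shows "amul n gam (B t) y \<in> chain_tail (Suc t + b)"
proof (cases t)
  case 0
  then show ?thesis using chain_head_mul_apow b by simp
next
  case (Suc s)
  have "B t = amul n gam (B 0) (B s)"
    using chain_mul[of s] Suc t chain_length by simp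
  moreover have "y \<in> carrier_vec n" using b apow_subset_carrier by blast
  ultimately have "amul n gam (B t) y = amul n gam (B 0) (amul n gam (B s) y)"
    using Suc t chain_length by (auto intro!: amul_assoc[OF assoc] basis_carrier)
  moreover have "B s \<in> apow n gam (Suc s)"
    using Suc t chain_length chain_degree by (intro basis_in_apow) auto
  then have "amul n gam (B s) y \<in> apow n gam (Suc s + b)"
    using b by (intro apow_mul) auto
  ultimately show ?thesis
    using chain_head_mul_apow[of "Suc s + b"] Suc by simp
qed

context
  fixes K :: nat
  assumes gap: "1 \<le> K" "K \<le> N" "\<And>t. N \<le> t \<Longrightarrow> t < n \<Longrightarrow> dg t \<noteq> K"
begin

lemma basis_above_gap:
  assumes "t < n" "K \<le> dg t"
  shows "Suc t = K \<or> B t \<in> apow n gam (Suc K)"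
proof (cases "dg t = K")
  case True
  have "t < N"
  proof (rule ccontr)
    assume "\<not> t < N"
    then show False using gap(3)[of t] assms(1) True by simp
  qed
  then show ?thesis using True chain_degree by simp
next
  case False
  then show ?thesis using assms gap(1) by (intro disjI2 basis_in_apow) auto
qed

lemma apow_gap_vspan_basis: "apow n gam K \<subseteq> vspan n (B ` {t. t < n \<and> K \<le> dg t})"
  using gap by (intro apow_subset_vspan_basis) simp

lemma apow_at_gap:
  assumes IH: "apow n gam (Suc K) \<subseteq> chain_tail (Suc K)"
  shows "apow n gam K \<subseteq> chain_tail K"
proof -
  have "B t \<in> chain_tail K" if "t < n" "K \<le> dg t" for t
    using basis_above_gap[OF that]
  proof
    assume "Suc t = K"
    then show ?thesis using gap by (intro basis_in_chain_tail) auto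
  next
    assume "B t \<in> apow n gam (Suc K)"
    then show ?thesis using IH chain_tail_antimono[of K "Suc K"] by auto
  qed
  then have "B ` {t. t < n \<and> K \<le> dg t} \<subseteq> chain_tail K" by blast
  then have "vspan n (B ` {t. t < n \<and> K \<le> dg t}) \<subseteq> chain_tail K"
    by (rule vspan_minimal[OF _ chain_tail_subspace])
  then show ?thesis by (rule order_trans[OF apow_gap_vspan_basis])
qed

lemma apow_above_gap:
  assumes KM: "K < M" and IH: "apow n gam (Suc M) \<subseteq> chain_tail (Suc M)"
  shows "apow n gam M \<subseteq> chain_tail M"
proof -
  have "amul n gam x y \<in> chain_tail M"
    if x: "x \<in> apow n gam K" and y: "y \<in> apow n gam (M - K)" for x y
  proof (rule amul_vspan_left[OF _ chain_tail_subspace])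
    show "B ` {t. t < n \<and> K \<le> dg t} \<subseteq> carrier_vec n" using basis_carrier by blast
    show "x \<in> vspan n (B ` {t. t < n \<and> K \<le> dg t})" using apow_gap_vspan_basis x by blast
  next
    fix x' assume "x' \<in> B ` {t. t < n \<and> K \<le> dg t}"
    then obtain t where t: "t < n" "K \<le> dg t" "x' = B t" by blast
    from basis_above_gap[OF t(1,2)] show "amul n gam x' y \<in> chain_tail M"
    proof
      assume "Suc t = K"
      then show ?thesis
        using chain_mul_apow[of t "M - K" y] t y KM gap by simp
    next
      assume "B t \<in> apow n gam (Suc K)"
      then have "amul n gam x' y \<in> apow n gam (Suc K + (M - K))"
        using t y KM by (intro apow_mul) auto
      then show ?thesis using IH chain_tail_antimono[of M "Suc M"] KM by auto
    qed
  qed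
  then have "products n gam (apow n gam K) (apow n gam (M - K)) \<subseteq> chain_tail M"
    unfolding products_def by blast
  then have "vspan n (products n gam (apow n gam K) (apow n gam (M - K))) \<subseteq> chain_tail M"
    by (rule vspan_minimal[OF _ chain_tail_subspace])
  moreover have "apow n gam M \<subseteq> vspan n (products n gam (apow n gam K) (apow n gam (M - K)))"
    using gap KM by (intro apow_subset_vspan_products[OF assoc]) auto
  ultimately show ?thesis by (rule order_trans[rotated])
qed

text \<open>Descending induction, starting beyond the nilpotency index where \<open>A\<^sup>M = 0\<close>.\<close>
lemma apow_subset_chain_tail:
  assumes "K \<le> M"
  shows "apow n gam M \<subseteq> chain_tail M"
proof -
  obtain i0 where i0: "\<And>M. i0 \<le> M \<Longrightarrow> apow n gam M \<subseteq> {0\<^sub>v n}"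
    using apow_eventually_zero by blast
  show ?thesis
  proof (rule inc_induct[where P = "\<lambda>m. apow n gam m \<subseteq> chain_tail m"])
    show "M \<le> max M i0" by simp
    show "apow n gam (max M i0) \<subseteq> chain_tail (max M i0)"
      using i0[of "max M i0"] subspace_zero[OF chain_tail_subspace] by auto
  next
    fix m assume "M \<le> m" "apow n gam (Suc m) \<subseteq> chain_tail (Suc m)"
    then show "apow n gam m \<subseteq> chain_tail m"
    proof (cases "m = K")
      case True
      then show ?thesis using apow_at_gap \<open>apow n gam (Suc m) \<subseteq> chain_tail (Suc m)\<close> by simp
    next
      case False
      then have "K < m" using \<open>M \<le> m\<close> assms by simp
      then show ?thesis using apow_above_gap \<open>apow n gam (Suc m) \<subseteq> chain_tail (Suc m)\<close> by blast
    qed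
  qed
qed

theorem degree_below_gap:
  assumes "N \<le> t" "t < n"
  shows "dg t < K"
proof (rule ccontr)
  assume "\<not> dg t < K"
  then have "B t \<in> apow n gam K" using assms gap by (intro basis_in_apow) auto
  also have "\<dots> \<subseteq> chain_tail K" by (rule apow_subset_chain_tail) simp
  also have "\<dots> \<subseteq> vspan n (B ` {..<N})" unfolding chain_tail_def by (intro vspan_mono) auto
  finally show False
    using basis_vec_notin_vspan[OF basis, of "{..<N}" t] assms chain_length by auto
qed

end

end

lemma chain_basis_of_filiform_basis:
  fixes e f :: "nat \<Rightarrow> complex vec" and r :: "nat \<Rightarrow> nat"
  assumes "is_assoc_alg n gam" "is_nilpotent_alg n gam" "is_natural_grading n gam G"
    and "is_basis n (\<lambda>i. if i < N then e (i + 1) else f (i - N + 1))"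
    and "\<forall>i. 1 \<le> i \<and> i \<le> N - 1 \<longrightarrow> amul n gam (e 1) (e i) = e (i + 1)"
    and "amul n gam (e 1) (e N) = 0\<^sub>v n"
    and "\<forall>j. 1 \<le> j \<and> j \<le> p \<longrightarrow> amul n gam (e 1) (f j) = 0\<^sub>v n"
    and "\<forall>i. 1 \<le> i \<and> i \<le> N \<longrightarrow> e i \<in> G i"
    and "\<forall>i. 1 \<le> i \<and> i \<le> p \<longrightarrow> 1 \<le> r i \<and> f i \<in> G (r i)"
    and N: "1 \<le> N" "n = N + p"
  shows "chain_basis n gam G (\<lambda>t. if t < N then e (t + 1) else f (t - N + 1))
    (\<lambda>t. if t < N then t + 1 else r (t - N + 1)) N"
proof -
  have e_mul: "amul n gam (e 1) (e i) = (if i < N then e (Suc i) else 0\<^sub>v n)"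
    if "1 \<le> i" "i \<le> N" for i
    using assms(5)[rule_format, of i] assms(6) that by (cases "i = N") auto
  have f_mul: "amul n gam (e 1) (f (t - N + 1)) = 0\<^sub>v n" if "N \<le> t" "t < n" for t
    using assms(7)[rule_format, of "t - N + 1"] that N by simp
  have e_deg: "e (t + 1) \<in> G (t + 1)" if "t < N" for t
    using assms(8)[rule_format, of "t + 1"] that by simp
  have f_deg: "1 \<le> r (t - N + 1) \<and> f (t - N + 1) \<in> G (r (t - N + 1))" if "N \<le> t" "t < n" for t
    using assms(9)[rule_format, of "t - N + 1"] that N by simp
  let ?B = "\<lambda>t. if t < N then e (t + 1) else f (t - N + 1)"
  show ?thesis
  proof
    fix t assume "t < n"
    then show "amul n gam (?B 0) (?B t) = (if Suc t < N then ?B (Suc t) else 0\<^sub>v n)"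
      using e_mul[of "Suc t"] f_mul[of t] N by (cases "t < N") auto
  qed (use assms(1-4) e_deg f_deg N in \<open>auto simp: not_less\<close>)
qed

lemma missing_degree:
  fixes r :: "nat \<Rightarrow> nat"
  assumes mono: "\<forall>i j. 1 \<le> i \<and> i \<le> j \<and> j \<le> p \<longrightarrow> r i \<le> r j"
    and s: "1 \<le> s" "s \<le> p" "s < r s"
  obtains K where "1 \<le> K" "K \<le> s" "\<And>j. 1 \<le> j \<Longrightarrow> j \<le> p \<Longrightarrow> r j \<noteq> K"
proof -
  have "\<not> {1..s} \<subseteq> r ` {1..<s}"
  proof
    assume "{1..s} \<subseteq> r ` {1..<s}"
    then have "card {1..s} \<le> card (r ` {1..<s})" by (intro card_mono) auto
    also have "\<dots> \<le> card {1..<s}" by (rule card_image_le) simp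
    finally show False using s by simp
  qed
  then obtain K where "K \<in> {1..s}" and K_notin: "K \<notin> r ` {1..<s}" by blast
  then have K: "1 \<le> K" "K \<le> s" "K \<notin> r ` {1..<s}" using K_notin by auto
  have "r j \<noteq> K" if "1 \<le> j" "j \<le> p" for j
  proof (cases "j < s")
    case False
    then have "r s \<le> r j" using mono[rule_format, of s j] s that by simp
    then show ?thesis using s K by simp
  qed (use K that in auto)
  with K show ?thesis using that by blast
qed

theorem mainTheorem1:
  fixes n p :: nat and gam :: "nat \<Rightarrow> nat \<Rightarrow> nat \<Rightarrow> complex"
    and G :: "nat \<Rightarrow> complex vec set"
    and e f :: "nat \<Rightarrow> complex vec" and r :: "nat \<Rightarrow> nat"
  assumes "p \<ge> 1"
    and "is_assoc_alg n gam"
    and "is_nilpotent_alg n gam"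
    and "is_natural_grading n gam G"
    and "is_p_filiform n gam p"
    and "is_basis n (\<lambda>i. if i < n - p then e (i + 1) else f (i - (n - p) + 1))"
    and "e 1 \<in> G 1"
    and "\<forall>i. 1 \<le> i \<and> i \<le> n - p - 1 \<longrightarrow> amul n gam (e 1) (e i) = e (i + 1)"
    and "amul n gam (e 1) (e (n - p)) = 0\<^sub>v n"
    and "\<forall>j. 1 \<le> j \<and> j \<le> p \<longrightarrow> amul n gam (e 1) (f j) = 0\<^sub>v n"
    and "\<forall>i. 1 \<le> i \<and> i \<le> n - p \<longrightarrow> e i \<in> G i"
    and "\<forall>i. 1 \<le> i \<and> i \<le> p \<longrightarrow> 1 \<le> r i \<and> f i \<in> G (r i)"
    and "\<forall>i j. 1 \<le> i \<and> i \<le> j \<and> j \<le> p \<longrightarrow> r i \<le> r j"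
    and "r p \<le> n - p"
  shows "\<forall>s. 1 \<le> s \<and> s \<le> p \<longrightarrow> r s \<le> s"
proof (intro allI impI)
  fix s assume s: "1 \<le> s \<and> s \<le> p"
  have N: "1 \<le> n - p" "r s \<le> n - p"
    using assms(12)[rule_format, of p] assms(13)[rule_format, of s p] assms(1,14) s by auto
  then have "n = n - p + p" by simp
  interpret chain_basis n gam G "\<lambda>t. if t < n - p then e (t + 1) else f (t - (n - p) + 1)"
    "\<lambda>t. if t < n - p then t + 1 else r (t - (n - p) + 1)" "n - p"
    by (rule chain_basis_of_filiform_basis[OF assms(2-4,6,8-12) N(1) \<open>n = n - p + p\<close>])
  show "r s \<le> s"
  proof (rule ccontr)
    assume "\<not> r s \<le> s"
    then obtain K where K: "1 \<le> K" "K \<le> s" "\<And>j. 1 \<le> j \<Longrightarrow> j \<le> p \<Longrightarrow> r j \<noteq> K"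
      using missing_degree[OF assms(13)] s by (metis not_le)
    have "(\<lambda>t. if t < n - p then t + 1 else r (t - (n - p) + 1)) (n - p + s - 1) < K"
      using K s N \<open>\<not> r s \<le> s\<close> by (intro degree_below_gap) auto
    moreover have "(\<lambda>t. if t < n - p then t + 1 else r (t - (n - p) + 1)) (n - p + s - 1) = r s"
      using s by auto
    ultimately show False using K(2) \<open>\<not> r s \<le> s\<close> by simp
  qed
qed

end
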